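(* Let $n\ge 4$ be an integer and let $QD_{2^n}=\langle a,b : a^{2^{n-1}}=b^2=1,\ bab^{-1}=a^{2^{n-2}-1}\rangle$ be the quasidihedral group of order $2^n$. Let $\Gamma_{QD_{2^n}}$ be its non-commuting graph. Let $t_1,t_2$ be the two roots of the equation $(2^{n-1}-2)x^2-(2^n-10)x-2^{n-1}=0$. Then the spectrum of the distance signless Laplacian matrix $D^Q(\Gamma_{QD_{2^n}})$ (eigenvalues counted with multiplicity, multiplicities being added if two of the listed values coincide) consists of: (a) $2^n-4$ with multiplicity $2^{n-2}$; (b) $2^n-2$ with multiplicity $2^{n-2}-1$; (c) $2^n+2^{n-1}-8$ with multiplicity $2^{n-1}-3$; (d) $t_k(2^{n-1}-2)+3\cdot 2^{n-1}-2$ with multiplicity $1$, for each $k=1,2$.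
   Context: For a finite non-abelian group $G$ with centre $Z(G)$, the non-commuting graph $\Gamma_G$ is the simple undirected graph with vertex set $G\setminus Z(G)$, in which two distinct vertices $u,v$ are adjacent if and only if $uv\ne vu$. For a connected graph $H$, $d_{uv}$ denotes the length of a shortest path between $u$ and $v$; the distance matrix $D(H)$ has $(u,v)$-entry $d_{uv}$. The transmission of a vertex $v$ is $\sum_{u} d_{uv}$, and $Tr(H)$ is the diagonal matrix of vertex transmissions. The distance signless Laplacian matrix is $D^Q(H)=Tr(H)+D(H)$. *)

theory Defs
  imports "HOL-Algebra.Group" "HOL-Algebra.Generated_Groups" "Jordan_Normal_Form.Char_Poly"
begin

definition grp_center :: "('a, 'b) monoid_scheme \<Rightarrow> 'a set" where
  "grp_center G = {z \<in> carrier G. \<forall>x \<in> carrier G. z \<otimes>\<^bsub>G\<^esub> x = x \<otimes>\<^bsub>G\<^esub> z}"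

definition ncg_verts :: "('a, 'b) monoid_scheme \<Rightarrow> 'a set" where
  "ncg_verts G = carrier G - grp_center G"

definition ncg_adj :: "('a, 'b) monoid_scheme \<Rightarrow> 'a \<Rightarrow> 'a \<Rightarrow> bool" where
  "ncg_adj G u v \<longleftrightarrow> u \<in> ncg_verts G \<and> v \<in> ncg_verts G \<and> u \<noteq> v \<and>
     u \<otimes>\<^bsub>G\<^esub> v \<noteq> v \<otimes>\<^bsub>G\<^esub> u"

fun ncg_walk :: "('a, 'b) monoid_scheme \<Rightarrow> nat \<Rightarrow> 'a \<Rightarrow> 'a \<Rightarrow> bool" where
  "ncg_walk G 0 u v \<longleftrightarrow> u = v \<and> u \<in> ncg_verts G"
| "ncg_walk G (Suc k) u v \<longleftrightarrow> (\<exists>w. ncg_adj G u w \<and> ncg_walk G k w v)"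

definition ncg_dist :: "('a, 'b) monoid_scheme \<Rightarrow> 'a \<Rightarrow> 'a \<Rightarrow> nat" where
  "ncg_dist G u v = (LEAST k. ncg_walk G k u v)"

definition ncg_transmission :: "('a, 'b) monoid_scheme \<Rightarrow> 'a \<Rightarrow> nat" where
  "ncg_transmission G v = (\<Sum>u \<in> ncg_verts G. ncg_dist G u v)"

text \<open>Distance signless Laplacian D^Q = Tr + D, as a matrix w.r.t. the vertex
  enumeration vs (a list listing every vertex exactly once).\<close>
definition ncg_DQ :: "('a, 'b) monoid_scheme \<Rightarrow> 'a list \<Rightarrow> real mat" where
  "ncg_DQ G vs = mat (length vs) (length vs)
     (\<lambda>(i, j). (if i = j then real (ncg_transmission G (vs ! i)) else 0)
               + real (ncg_dist G (vs ! i) (vs ! j)))"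

end

theory Submission
  imports Defs
begin

text \<open>Write \<open>q = 2^(n-2)\<close> and \<open>m = 2^(n-1)\<close>. In \<open>QD\<^bsub>2^n\<^esub>\<close> every element is \<open>a^i b^e\<close>, the centre
  is \<open>{1, a^q}\<close>, powers of \<open>a\<close> commute, \<open>a^i\<close> commutes with \<open>a^j b\<close> iff \<open>q\<close> divides \<open>i\<close>, and
  \<open>a^i b\<close> commutes with \<open>a^j b\<close> iff \<open>i \<equiv> j (mod q)\<close>, i.e. iff the two are equal or differ by
  the factor \<open>a^q\<close>. So the \<open>2q - 2\<close> non-central powers \<open>A\<close> of \<open>a\<close> are pairwise at distance 2,
  at distance 1 from the \<open>2q\<close> elements \<open>B\<close> of the coset \<open>\<langle>a\<rangle>b\<close>, and two elements of \<open>B\<close> are at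
  distance 2 if they differ by \<open>a^q\<close> and at distance 1 otherwise.

  For this distance pattern \<open>D^Q\<close> has the eigenvectors \<open>e u - e v\<close> on \<open>A\<close> (eigenvalue \<open>3m - 8\<close>),
  \<open>e x - e (a^q x)\<close> on \<open>B\<close> (\<open>2m - 4\<close>) and the zero-sum combinations of the pair sums
  \<open>e x + e (a^q x)\<close> (\<open>2m - 2\<close>). On \<open>span {1_A, 1_B}\<close> it acts by the quotient matrix
  \<open>[[5m - 12, m], [m - 2, 3m - 2]]\<close>, whose eigenvector \<open>t 1_A + 1_B\<close> has eigenvalue
  \<open>t (m - 2) + 3m - 2\<close> exactly when \<open>t\<close> solves \<open>(m - 2) t\<^sup>2 - (2m - 10) t - m = 0\<close>. Completing the
  eigenvectors by two vectors gives an explicit basis in which \<open>D^Q\<close> is triangular.\<close>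

section \<open>Matrices indexed by an enumeration of a finite set\<close>

definition kernel_mat :: "'a list \<Rightarrow> 'a list \<Rightarrow> ('a \<Rightarrow> 'a \<Rightarrow> 'b) \<Rightarrow> 'b mat" where
  "kernel_mat xs ys f = mat (length xs) (length ys) (\<lambda>(i, j). f (xs ! i) (ys ! j))"

lemma kernel_mat_carrier [simp]: "kernel_mat xs ys f \<in> carrier_mat (length xs) (length ys)"
  and dim_row_kernel_mat [simp]: "dim_row (kernel_mat xs ys f) = length xs"
  and dim_col_kernel_mat [simp]: "dim_col (kernel_mat xs ys f) = length ys"
  by (simp_all add: kernel_mat_def)

lemma index_kernel_mat [simp]:
  "i < length xs \<Longrightarrow> j < length ys \<Longrightarrow> kernel_mat xs ys f $$ (i, j) = f (xs ! i) (ys ! j)"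
  by (simp add: kernel_mat_def)

lemma kernel_mat_cong:
  "(\<And>u v. u \<in> set xs \<Longrightarrow> v \<in> set ys \<Longrightarrow> f u v = g u v) \<Longrightarrow> kernel_mat xs ys f = kernel_mat xs ys g"
  by (intro eq_matI) auto

lemma sum_nth_distinct:
  assumes "distinct ys"
  shows "(\<Sum>k<length ys. h (ys ! k)) = (\<Sum>w\<in>set ys. h w)"
  using assms by (simp add: sum.distinct_set_conv_list sum_list_sum_nth lessThan_atLeast0)

lemma kernel_mat_mult:
  assumes "distinct ys"
  shows "kernel_mat xs ys f * kernel_mat ys zs g = kernel_mat xs zs (\<lambda>u v. \<Sum>w\<in>set ys. f u w * g w v)"
proof (rule eq_matI)
  fix i j assume "i < dim_row (kernel_mat xs zs (\<lambda>u v. \<Sum>w\<in>set ys. f u w * g w v))"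
    and "j < dim_col (kernel_mat xs zs (\<lambda>u v. \<Sum>w\<in>set ys. f u w * g w v))"
  then show "(kernel_mat xs ys f * kernel_mat ys zs g) $$ (i, j)
      = kernel_mat xs zs (\<lambda>u v. \<Sum>w\<in>set ys. f u w * g w v) $$ (i, j)"
    using sum_nth_distinct[OF assms, of "\<lambda>w. f (xs ! i) w * g w (zs ! j)"]
    by (simp add: scalar_prod_def lessThan_atLeast0)
qed auto

lemma kernel_mat_delta:
  "distinct xs \<Longrightarrow> kernel_mat xs xs (\<lambda>u v. if u = v then 1 else 0) = 1\<^sub>m (length xs)"
  by (intro eq_matI) (auto simp: nth_eq_iff_index_eq)

lemma char_poly_kernel_mat_intertwined:
  fixes M R S T :: "'a \<Rightarrow> 'a \<Rightarrow> 'b :: field"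
  assumes vs: "distinct vs" "set vs = V" and ws: "distinct ws" "set ws = V"
    and TS: "\<And>u v. u \<in> V \<Longrightarrow> v \<in> V \<Longrightarrow> (\<Sum>w\<in>V. T u w * S w v) = (if u = v then 1 else 0)"
    and TM: "\<And>u v. u \<in> V \<Longrightarrow> v \<in> V \<Longrightarrow> (\<Sum>w\<in>V. T u w * M w v) = (\<Sum>w\<in>V. R u w * T w v)"
  shows "char_poly (kernel_mat vs vs M) = char_poly (kernel_mat ws ws R)"
proof -
  define k where "k = length ws"
  have len: "length vs = k" using vs ws unfolding k_def by (metis distinct_card)
  let ?S = "kernel_mat vs ws S" and ?T = "kernel_mat ws vs T"
  let ?M = "kernel_mat vs vs M" and ?R = "kernel_mat ws ws R"
  have S: "?S \<in> carrier_mat k k" and T: "?T \<in> carrier_mat k k"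
    and M: "?M \<in> carrier_mat k k" and R: "?R \<in> carrier_mat k k"
    using len unfolding k_def by (auto simp del: kernel_mat_carrier)
  have "?T * ?S = kernel_mat ws ws (\<lambda>u v. if u = v then 1 else 0)"
    using vs ws TS by (simp add: kernel_mat_mult, intro kernel_mat_cong) auto
  then have TS1: "?T * ?S = 1\<^sub>m k"
    using ws kernel_mat_delta unfolding k_def by metis
  have TM1: "?T * ?M = ?R * ?T"
    using vs ws TM by (simp add: kernel_mat_mult, intro kernel_mat_cong) auto
  have ST1: "?S * ?T = 1\<^sub>m k" using mat_mult_left_right_inverse[OF T S TS1] .
  have "?M = ?S * ?T * ?M" using ST1 left_mult_one_mat[OF M] by simp
  also have "\<dots> = ?S * (?T * ?M)" using S T M by (simp add: assoc_mult_mat)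
  also have "\<dots> = ?S * ?R * ?T" using TM1 S T R by (simp add: assoc_mult_mat)
  finally have "similar_mat_wit ?M ?R ?S ?T"
    unfolding similar_mat_wit_def Let_def using S T M R TS1 ST1 by auto
  then show ?thesis
    using char_poly_similar similar_mat_def by blast
qed

lemma char_poly_kernel_mat_lower_triangular:
  fixes R :: "'a \<Rightarrow> 'a \<Rightarrow> 'b :: field"
  assumes ws: "distinct ws"
    and zero: "\<And>i j. i < j \<Longrightarrow> j < length ws \<Longrightarrow> R (ws ! i) (ws ! j) = 0"
  shows "char_poly (kernel_mat ws ws R) = (\<Prod>u\<in>set ws. [:- R u u, 1:])"
proof -
  let ?R = "kernel_mat ws ws R"
  have RT: "transpose_mat ?R \<in> carrier_mat (length ws) (length ws)" by simp
  have "upper_triangular (transpose_mat ?R)"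
    using zero unfolding upper_triangular_def by auto
  then have "char_poly (transpose_mat ?R) = (\<Prod>x\<leftarrow>diag_mat (transpose_mat ?R). [:- x, 1:])"
    by (rule char_poly_upper_triangular[OF RT])
  also have "\<dots> = (\<Prod>u\<leftarrow>ws. [:- R u u, 1:])"
    by (rule arg_cong[where f = prod_list], rule nth_equalityI) (auto simp: diag_mat_def)
  also have "\<dots> = (\<Prod>u\<in>set ws. [:- R u u, 1:])"
    using ws by (simp add: prod.distinct_set_conv_list)
  finally show ?thesis
    using char_poly_transpose_mat[OF kernel_mat_carrier[of ws ws R]] by simp
qed

section \<open>Distances in the non-commuting graph\<close>

definition dist_signless_laplacian :: "'a set \<Rightarrow> ('a \<Rightarrow> 'a \<Rightarrow> nat) \<Rightarrow> 'a \<Rightarrow> 'a \<Rightarrow> real" where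
  "dist_signless_laplacian V d u v = (if u = v then real (\<Sum>w\<in>V. d w v) else 0) + real (d u v)"

lemma ncg_DQ_eq_kernel_mat:
  "distinct vs \<Longrightarrow> ncg_DQ G vs = kernel_mat vs vs (dist_signless_laplacian (ncg_verts G) (ncg_dist G))"
  by (intro eq_matI)
    (auto simp: ncg_DQ_def dist_signless_laplacian_def ncg_transmission_def nth_eq_iff_index_eq)

lemma ncg_adj_sym: "ncg_adj G u v \<longleftrightarrow> ncg_adj G v u"
  by (auto simp: ncg_adj_def)

lemma ncg_dist_self: "u \<in> ncg_verts G \<Longrightarrow> ncg_dist G u u = 0"
  unfolding ncg_dist_def by (rule Least_equality) auto

lemma ncg_dist_adj:
  assumes "ncg_adj G u v"
  shows "ncg_dist G u v = 1"
  unfolding ncg_dist_def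
proof (rule Least_equality)
  show "ncg_walk G 1 u v" using assms by (auto simp: ncg_adj_def)
  show "1 \<le> k" if "ncg_walk G k u v" for k
    using that assms by (cases k) (auto simp: ncg_adj_def)
qed

lemma ncg_dist_common_neighbour:
  assumes "u \<noteq> v" "\<not> ncg_adj G u v" "ncg_adj G u w" "ncg_adj G w v"
  shows "ncg_dist G u v = 2"
  unfolding ncg_dist_def
proof (rule Least_equality)
  show "ncg_walk G 2 u v"
    using assms(3,4) by (auto simp: numeral_2_eq_2 ncg_adj_def)
  show "2 \<le> k" if "ncg_walk G k u v" for k
  proof (rule ccontr)
    assume "\<not> 2 \<le> k"
    then have "k = 0 \<or> k = 1" by auto
    then show False using that assms(1,2) by (auto simp: ncg_adj_def)
  qed
qed

section \<open>The distance pattern and the spectrum of its \<open>D^Q\<close> matrix\<close>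

text \<open>\<open>A\<close> and \<open>B = B1 \<union> B2\<close> model the two kinds of vertices; \<open>pi\<close> pairs each vertex of \<open>B\<close>
  with the unique other vertex of \<open>B\<close> it commutes with, and \<open>B1\<close> contains one vertex of each
  pair.\<close>

locale qd_distance_pattern =
  fixes V A B1 B2 :: "'a set" and pi :: "'a \<Rightarrow> 'a" and q :: nat
  assumes finite_V: "finite V" and V_eq: "V = A \<union> B1 \<union> B2"
    and disjoint: "A \<inter> B1 = {}" "A \<inter> B2 = {}" "B1 \<inter> B2 = {}"
    and card_A: "card A + 2 = 2 * q" and card_B1: "card B1 = q" and card_B2: "card B2 = q"
    and pi_B1: "\<And>u. u \<in> B1 \<Longrightarrow> pi u \<in> B2" and pi_B2: "\<And>u. u \<in> B2 \<Longrightarrow> pi u \<in> B1"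
    and pi_pi: "\<And>u. u \<in> B1 \<union> B2 \<Longrightarrow> pi (pi u) = u"
begin

abbreviation "B \<equiv> B1 \<union> B2"
abbreviation "m \<equiv> 2 * real q"

definition pattern_dist :: "'a \<Rightarrow> 'a \<Rightarrow> nat" where
  "pattern_dist u v = (if u = v then 0 else if u \<in> A \<and> v \<in> A then 2 else if u \<in> A \<or> v \<in> A then 1
     else if v = pi u then 2 else 1)"

definition DQ :: "'a \<Rightarrow> 'a \<Rightarrow> real" where
  "DQ u v = (if u = v then (if u \<in> A then 3 * m - 6 else 2 * m - 2) else if u \<in> A \<and> v \<in> A then 2
     else if u \<in> A \<or> v \<in> A then 1 else if v = pi u then 2 else 1)"

lemma A_subset_V: "A \<subseteq> V" and B_subset_V: "B \<subseteq> V"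
  using V_eq by auto

lemma finite_A: "finite A" and finite_B: "finite B"
  and finite_B1: "finite B1" and finite_B2: "finite B2"
  using finite_subset[OF A_subset_V finite_V] finite_subset[OF B_subset_V finite_V] by auto

lemma not_A_if_B: "u \<in> B \<Longrightarrow> u \<notin> A"
  using disjoint by blast

lemma pi_B: "u \<in> B \<Longrightarrow> pi u \<in> B"
  using pi_B1 pi_B2 by blast

lemma pi_neq: "u \<in> B \<Longrightarrow> pi u \<noteq> u"
  using pi_B1 pi_B2 disjoint(3) by (metis Int_iff Un_iff empty_iff)

lemma real_card_A: "real (card A) = m - 2"
proof -
  have "real (card A) + 2 = m" using arg_cong[OF card_A, of real] by simp
  then show ?thesis by simp
qed

lemma real_card_B: "real (card B) = m"
  using card_B1 card_B2 disjoint finite_B1 finite_B2 by (simp add: card_Un_disjoint)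

lemma DQ_A_column:
  "v \<in> A \<Longrightarrow> w \<in> A \<Longrightarrow> DQ w v = 2 + (if w = v then 3 * m - 8 else 0)"
  by (simp add: DQ_def)

lemma DQ_B_column:
  assumes "v \<in> B" "w \<in> B"
  shows "DQ w v = 1 + (if w = v then 2 * m - 3 else 0) + (if w = pi v then 1 else 0)"
  using assms pi_pi[of v] pi_pi[of w] pi_neq[of v] not_A_if_B by (auto simp: DQ_def)

lemma sum_A_DQ:
  assumes "v \<in> V"
  shows "(\<Sum>w\<in>A. DQ w v) = (if v \<in> A then 5 * m - 12 else m - 2)"
proof (cases "v \<in> A")
  case True
  then have "(\<Sum>w\<in>A. DQ w v) = (\<Sum>w\<in>A. 2 + (if w = v then 3 * m - 8 else 0))"
    by (intro sum.cong) (simp_all add: DQ_A_column)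
  then show ?thesis
    using True finite_A by (simp add: sum.distrib real_card_A algebra_simps)
next
  case False
  then have "(\<Sum>w\<in>A. DQ w v) = (\<Sum>w\<in>A. 1)"
    by (intro sum.cong) (auto simp: DQ_def)
  then show ?thesis using False real_card_A by simp
qed

lemma sum_B_DQ:
  assumes v: "v \<in> V"
  shows "(\<Sum>w\<in>B. DQ w v) = (if v \<in> A then m else 3 * m - 2)"
proof (cases "v \<in> A")
  case True
  have "DQ w v = 1" if "w \<in> B" for w
    using that True not_A_if_B[OF that] by (auto simp: DQ_def)
  then have "(\<Sum>w\<in>B. DQ w v) = (\<Sum>w\<in>B. 1)"
    by (rule sum.cong[OF refl])
  then show ?thesis using True real_card_B by simp
next
  case False
  then have vB: "v \<in> B" using v V_eq by blast
  then have "(\<Sum>w\<in>B. DQ w v)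
      = (\<Sum>w\<in>B. 1 + (if w = v then 2 * m - 3 else 0) + (if w = pi v then 1 else 0))"
    by (intro sum.cong) (simp_all add: DQ_B_column)
  then show ?thesis
    using False vB pi_B[OF vB] finite_B by (simp add: sum.distrib real_card_B algebra_simps)
qed

lemma dist_signless_laplacian_pattern_dist:
  assumes u: "u \<in> V" and v: "v \<in> V"
  shows "dist_signless_laplacian V pattern_dist u v = DQ u v"
proof -
  have "(\<Sum>w\<in>V. DQ w v) = (\<Sum>w\<in>V. real (pattern_dist w v) + (if w = v then DQ v v else 0))"
    by (intro sum.cong) (auto simp: DQ_def pattern_dist_def)
  also have "\<dots> = real (\<Sum>w\<in>V. pattern_dist w v) + DQ v v"
    using finite_V v by (simp add: sum.distrib)
  finally have "real (\<Sum>w\<in>V. pattern_dist w v) = (\<Sum>w\<in>A. DQ w v) + (\<Sum>w\<in>B. DQ w v) - DQ v v"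
    using finite_A finite_B disjoint V_eq by (simp add: sum.union_disjoint Un_assoc Int_Un_distrib)
  also have "\<dots> = DQ v v"
    unfolding sum_A_DQ[OF v] sum_B_DQ[OF v] using v V_eq by (auto simp: DQ_def)
  finally show ?thesis
    by (auto simp: dist_signless_laplacian_def DQ_def pattern_dist_def)
qed

end

locale qd_distance_pattern_basis = qd_distance_pattern +
  fixes a0 b0 :: 'a and t :: real
  assumes a0: "a0 \<in> A" and b0: "b0 \<in> B1" and t_nonzero: "t \<noteq> 0"
    and t_root: "(m - 2) * t\<^sup>2 - (2 * m - 10) * t - m = 0"
begin

definition delta :: "'a \<Rightarrow> 'a \<Rightarrow> real" where
  "delta x w = (if w = x then 1 else 0)"

definition ind :: "'a set \<Rightarrow> 'a \<Rightarrow> real" where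
  "ind X w = (if w \<in> X then 1 else 0)"

text \<open>Column \<open>u\<close> of \<open>basis\<close> is the \<open>u\<close>-th vector of the new basis: the eigenvectors
  \<open>e u - e a0\<close> for \<open>u \<in> A\<close>, \<open>e u + e (pi u) - e b0 - e (pi b0)\<close> for \<open>u \<in> B1\<close> and
  \<open>e (pi u) - e u\<close> for \<open>u \<in> B2\<close>, completed by \<open>e a0 / t\<close> and \<open>e b0 - e a0 / t\<close> in the slots
  of \<open>a0\<close> and \<open>b0\<close>. Row \<open>u\<close> of \<open>coord\<close> is the \<open>u\<close>-th coordinate functional; row \<open>a0\<close>,
  \<open>t 1_A + 1_B\<close>, is a left eigenvector of \<open>DQ\<close> because \<open>t\<close> is a root.\<close>

definition basis :: "'a \<Rightarrow> 'a \<Rightarrow> real" where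
  "basis w u = (if u = a0 then delta a0 w / t
    else if u = b0 then delta b0 w - delta a0 w / t
    else if u \<in> A then delta u w - delta a0 w
    else if u \<in> B1 then delta u w + delta (pi u) w - delta b0 w - delta (pi b0) w
    else delta (pi u) w - delta u w)"

definition coord :: "'a \<Rightarrow> 'a \<Rightarrow> real" where
  "coord u w = (if u = a0 then t * ind A w + ind B w
    else if u = b0 then ind B w
    else if u \<in> A then delta u w
    else if u = pi b0 then (delta b0 w - delta (pi b0) w) / 2 - ind B w / 2
    else if u \<in> B1 then (delta u w + delta (pi u) w) / 2
    else (delta (pi u) w - delta u w) / 2)"

definition DQ_triangular :: "'a \<Rightarrow> 'a \<Rightarrow> real" where
  "DQ_triangular u v = (if u = a0 then (if v = a0 then t * (m - 2) + 3 * m - 2 else 0)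
    else if u = b0 then (if v = a0 then m / t else if v = b0 then 3 * m - 2 - m / t else 0)
    else if u \<in> A then (if v = a0 then 2 / t else if v = b0 then 1 - 2 / t
      else if v = u then 3 * m - 8 else 0)
    else if u = pi b0 then (if v = a0 then - m / (2 * t) else if v = b0 then - (m + 2) / 2 + m / (2 * t)
      else if v = u then 2 * m - 4 else 0)
    else if u \<in> B1 then (if v = a0 then 1 / t else if v = b0 then 1 - 1 / t
      else if v = u then 2 * m - 2 else 0)
    else (if v = u then 2 * m - 4 else 0))"

lemma base_point_facts:
  "a0 \<in> V" "b0 \<in> V" "pi b0 \<in> V" "pi b0 \<in> B2" "a0 \<notin> B1" "a0 \<notin> B2" "b0 \<notin> A" "b0 \<notin> B2"
  "pi b0 \<notin> A" "pi b0 \<notin> B1" "a0 \<noteq> b0" "b0 \<noteq> a0" "pi b0 \<noteq> a0" "a0 \<noteq> pi b0"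
  "pi b0 \<noteq> b0" "b0 \<noteq> pi b0" "pi (pi b0) = b0"
  using a0 b0 disjoint pi_B1[OF b0] pi_pi[of b0] V_eq by auto

lemma class_facts:
  "u \<in> B1 \<Longrightarrow> u \<notin> A" "u \<in> B2 \<Longrightarrow> u \<notin> A" "u \<in> B1 \<Longrightarrow> u \<notin> B2" "u \<in> B2 \<Longrightarrow> u \<notin> B1"
  "u \<in> A \<Longrightarrow> u \<notin> B1" "u \<in> A \<Longrightarrow> u \<notin> B2"
  "u \<in> B1 \<Longrightarrow> pi (pi u) = u" "u \<in> B2 \<Longrightarrow> pi (pi u) = u"
  using disjoint pi_pi by blast+

lemma class_neqs:
  "x \<in> A \<Longrightarrow> y \<in> B1 \<Longrightarrow> (x = y) = False" "x \<in> A \<Longrightarrow> y \<in> B1 \<Longrightarrow> (y = x) = False"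
  "x \<in> A \<Longrightarrow> y \<in> B2 \<Longrightarrow> (x = y) = False" "x \<in> A \<Longrightarrow> y \<in> B2 \<Longrightarrow> (y = x) = False"
  "x \<in> B1 \<Longrightarrow> y \<in> B2 \<Longrightarrow> (x = y) = False" "x \<in> B1 \<Longrightarrow> y \<in> B2 \<Longrightarrow> (y = x) = False"
  using disjoint by blast+

lemma pi_inj_B1: "u \<in> B1 \<Longrightarrow> v \<in> B1 \<Longrightarrow> (pi u = pi v) = (u = v)"
  and pi_inj_B2: "u \<in> B2 \<Longrightarrow> v \<in> B2 \<Longrightarrow> (pi u = pi v) = (u = v)"
  using class_facts(7,8) by metis+

lemma pi_eq_b0_iff:
  "u \<in> B2 \<Longrightarrow> (pi u = b0) = (u = pi b0)" "u \<in> B2 \<Longrightarrow> (b0 = pi u) = (u = pi b0)"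
  using class_facts(8)[of u] base_point_facts(17) by auto

lemma vertex_classes:
  assumes "x \<in> V"
  obtains "x = a0" | "x = b0" | "x = pi b0"
    | "x \<in> A" "x \<noteq> a0" "a0 \<noteq> x" "x \<notin> B1" "x \<notin> B2"
    | "x \<in> B1" "x \<noteq> b0" "b0 \<noteq> x" "x \<notin> A" "x \<notin> B2" "pi x \<in> B2" "pi x \<notin> A"
      "pi x \<notin> B1" "pi (pi x) = x"
    | "x \<in> B2" "x \<noteq> pi b0" "pi b0 \<noteq> x" "x \<notin> A" "x \<notin> B1" "pi x \<in> B1" "pi x \<notin> A"
      "pi x \<notin> B2" "pi (pi x) = x"
  using assms V_eq pi_B1[of x] pi_B2[of x] class_facts[of x] class_facts[of "pi x"] by blast

lemma sum_delta:
  assumes "x \<in> V"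
  shows "(\<Sum>w\<in>V. delta x w * g w) = g x"
proof -
  have "(\<Sum>w\<in>V. delta x w * g w) = (\<Sum>w\<in>V. if w = x then g w else 0)"
    by (rule sum.cong) (auto simp: delta_def)
  then show ?thesis using finite_V assms by simp
qed

lemma sum_ind:
  assumes "X \<subseteq> V"
  shows "(\<Sum>w\<in>V. ind X w * g w) = (\<Sum>w\<in>X. g w)"
proof -
  have "(\<Sum>w\<in>V. ind X w * g w) = (\<Sum>w\<in>V. if w \<in> X then g w else 0)"
    by (rule sum.cong) (auto simp: ind_def)
  also have "\<dots> = (\<Sum>w\<in>V \<inter> X. g w)" using finite_V by (simp add: sum.inter_restrict)
  finally show ?thesis using assms by (simp add: Int_absorb1)
qed

lemma sum_delta_set: "finite X \<Longrightarrow> (\<Sum>w\<in>X. delta x w) = ind X x"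
  by (simp add: delta_def ind_def)

lemma sum_coord:
  assumes u: "u \<in> V"
  shows "(\<Sum>w\<in>V. coord u w * g w) = (if u = a0 then t * (\<Sum>w\<in>A. g w) + (\<Sum>w\<in>B. g w)
    else if u = b0 then (\<Sum>w\<in>B. g w) else if u \<in> A then g u
    else if u = pi b0 then (g b0 - g (pi b0)) / 2 - (\<Sum>w\<in>B. g w) / 2
    else if u \<in> B1 then (g u + g (pi u)) / 2 else (g (pi u) - g u) / 2)"
proof -
  have piV: "pi u \<in> V" if "u \<in> B" using pi_B[OF that] B_subset_V by auto
  show ?thesis
    by (cases rule: vertex_classes[OF u])
      (simp_all add: coord_def base_point_facts u piV sum_delta sum_ind[OF A_subset_V]
        sum_ind[OF B_subset_V]
        sum.distrib sum_subtractf distrib_right left_diff_distrib diff_divide_distrib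
        add_divide_distrib mult.assoc flip: sum_distrib_left sum_divide_distrib)
qed

lemma sum_basis:
  assumes X: "finite X" and v: "v \<in> V"
  shows "(\<Sum>w\<in>X. basis w v) = (if v = a0 then ind X a0 / t
    else if v = b0 then ind X b0 - ind X a0 / t
    else if v \<in> A then ind X v - ind X a0
    else if v \<in> B1 then ind X v + ind X (pi v) - ind X b0 - ind X (pi b0)
    else ind X (pi v) - ind X v)"
  by (cases rule: vertex_classes[OF v])
    (simp_all add: basis_def base_point_facts X sum_delta_set sum.distrib sum_subtractf
      flip: sum_divide_distrib)

lemma coord_basis:
  assumes u: "u \<in> V" and v: "v \<in> V"
  shows "(\<Sum>w\<in>V. coord u w * basis w v) = (if u = v then 1 else 0)"
  unfolding sum_coord[OF u] sum_basis[OF finite_A v] sum_basis[OF finite_B v]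
  by (cases rule: vertex_classes[OF u]; cases rule: vertex_classes[OF v])
    (simp_all add: basis_def delta_def ind_def base_point_facts a0 b0 t_nonzero class_neqs
      pi_inj_B1 pi_inj_B2 pi_eq_b0_iff, (metis)+)

lemma DQ_triangular_eq_0: "w \<noteq> a0 \<Longrightarrow> w \<noteq> b0 \<Longrightarrow> w \<noteq> u \<Longrightarrow> DQ_triangular u w = 0"
  unfolding DQ_triangular_def by (simp; metis)

lemma sum_DQ_triangular:
  assumes u: "u \<in> V"
  shows "(\<Sum>w\<in>V. DQ_triangular u w * g w) = DQ_triangular u a0 * g a0 + DQ_triangular u b0 * g b0
    + (if u = a0 \<or> u = b0 then 0 else DQ_triangular u u * g u)"
proof -
  have "(\<Sum>w\<in>V. DQ_triangular u w * g w) = (\<Sum>w\<in>{a0, b0, u}. DQ_triangular u w * g w)"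
    using u base_point_facts by (intro sum.mono_neutral_right[OF finite_V]) (auto simp: DQ_triangular_eq_0)
  then show ?thesis
    using base_point_facts by (cases "u = a0 \<or> u = b0") (auto simp: insert_commute)
qed

lemma t_eigenvalue_eq: "(t * (m - 2) + 3 * m - 2) * t = t * (5 * m - 12) + m"
  using t_root by (simp add: power2_eq_square algebra_simps)

lemma left_eigenvector_a0:
  assumes v: "v \<in> V"
  shows "(\<Sum>w\<in>V. coord a0 w * DQ w v) = (t * (m - 2) + 3 * m - 2) * coord a0 v"
proof -
  have "(\<Sum>w\<in>V. coord a0 w * DQ w v)
      = t * (if v \<in> A then 5 * m - 12 else m - 2) + (if v \<in> A then m else 3 * m - 2)"
    unfolding sum_coord[OF base_point_facts(1)] sum_A_DQ[OF v] sum_B_DQ[OF v] by simp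
  also have "\<dots> = (t * (m - 2) + 3 * m - 2) * coord a0 v"
    using v V_eq not_A_if_B t_eigenvalue_eq by (auto simp: coord_def ind_def algebra_simps)
  finally show ?thesis .
qed

lemma coord_DQ:
  assumes u: "u \<in> V" and v: "v \<in> V"
  shows "(\<Sum>w\<in>V. coord u w * DQ w v) = (\<Sum>w\<in>V. DQ_triangular u w * coord w v)"
proof (cases "u = a0")
  case True
  have "(\<Sum>w\<in>V. DQ_triangular a0 w * coord w v) = (t * (m - 2) + 3 * m - 2) * coord a0 v"
    unfolding sum_DQ_triangular[OF base_point_facts(1)] by (simp add: DQ_triangular_def base_point_facts)
  then show ?thesis
    using left_eigenvector_a0[OF v] True by simp
next
  case False
  then show ?thesis
    unfolding sum_coord[OF u] sum_DQ_triangular[OF u] sum_A_DQ[OF v] sum_B_DQ[OF v]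
    by (cases rule: vertex_classes[OF u]; cases rule: vertex_classes[OF v])
      (simp_all add: DQ_def DQ_triangular_def coord_def delta_def ind_def base_point_facts a0 b0 t_nonzero
        class_neqs pi_inj_B1 pi_inj_B2 pi_eq_b0_iff field_simps)
qed

lemma DQ_triangular_diag:
  "u \<in> V \<Longrightarrow> DQ_triangular u u = (if u = a0 then t * (m - 2) + 3 * m - 2
     else if u = b0 then 3 * m - 2 - m / t else if u \<in> A then 3 * m - 8
     else if u \<in> B1 then 2 * m - 2 else 2 * m - 4)"
  by (cases rule: vertex_classes) (simp_all add: DQ_triangular_def base_point_facts)

lemma prod_DQ_triangular_diag:
  "(\<Prod>u\<in>V. [:- DQ_triangular u u, 1:]) = [:- (t * (m - 2) + 3 * m - 2), 1:] * [:- (3 * m - 2 - m / t), 1:]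
     * [:- (3 * m - 8), 1:] ^ (2 * q - 3) * [:- (2 * m - 2), 1:] ^ (q - 1) * [:- (2 * m - 4), 1:] ^ q"
proof -
  let ?f = "\<lambda>u. [:- DQ_triangular u u, 1:]"
  have V: "V = insert a0 (insert b0 ((A - {a0}) \<union> ((B1 - {b0}) \<union> B2)))"
    using V_eq a0 b0 by auto
  have "(\<Prod>u\<in>V. ?f u) = ?f a0 * (?f b0 * ((\<Prod>u\<in>A - {a0}. ?f u)
      * ((\<Prod>u\<in>B1 - {b0}. ?f u) * (\<Prod>u\<in>B2. ?f u))))"
    unfolding V using finite_A finite_B1 finite_B2 base_point_facts a0 b0 disjoint
    by (simp add: prod.union_disjoint Int_Un_distrib Int_Un_distrib2 Diff_Int_distrib2 disjoint_iff)
  also have "?f a0 = [:- (t * (m - 2) + 3 * m - 2), 1:]"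
    using DQ_triangular_diag[OF base_point_facts(1)] by simp
  also have "?f b0 = [:- (3 * m - 2 - m / t), 1:]"
    using DQ_triangular_diag[OF base_point_facts(2)] base_point_facts by simp
  also have "(\<Prod>u\<in>A - {a0}. ?f u) = (\<Prod>u\<in>A - {a0}. [:- (3 * m - 8), 1:])"
    using DQ_triangular_diag A_subset_V base_point_facts by (intro prod.cong) auto
  also have "\<dots> = [:- (3 * m - 8), 1:] ^ (2 * q - 3)"
  proof -
    have "card (A - {a0}) = 2 * q - 3" using card_A a0 finite_A by (simp add: card_Diff_singleton)
    then show ?thesis by simp
  qed
  also have "(\<Prod>u\<in>B1 - {b0}. ?f u) = (\<Prod>u\<in>B1 - {b0}. [:- (2 * m - 2), 1:])"
  proof (rule prod.cong)
    fix u assume u: "u \<in> B1 - {b0}"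
    then have "u \<notin> A" "u \<noteq> a0" "u \<in> V" using class_facts(1) a0 V_eq by auto
    then show "?f u = [:- (2 * m - 2), 1:]" using DQ_triangular_diag[of u] u by auto
  qed simp
  also have "\<dots> = [:- (2 * m - 2), 1:] ^ (q - 1)"
    using card_B1 b0 finite_B1 by (simp add: card_Diff_singleton)
  also have "(\<Prod>u\<in>B2. ?f u) = (\<Prod>u\<in>B2. [:- (2 * m - 4), 1:])"
  proof (rule prod.cong)
    fix u assume u: "u \<in> B2"
    then have "u \<noteq> a0" "u \<notin> A" "u \<noteq> b0" "u \<notin> B1" "u \<in> V"
      using class_facts(2,4) base_point_facts V_eq by auto
    then show "?f u = [:- (2 * m - 4), 1:]" using DQ_triangular_diag[of u] by auto
  qed simp
  also have "\<dots> = [:- (2 * m - 4), 1:] ^ q"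
    using card_B2 by simp
  finally show ?thesis by (simp only: mult.assoc)
qed

theorem char_poly_pattern_DQ:
  assumes vs: "distinct vs" "set vs = V"
  shows "char_poly (kernel_mat vs vs (dist_signless_laplacian V pattern_dist)) =
    [:- (t * (m - 2) + 3 * m - 2), 1:] * [:- (3 * m - 2 - m / t), 1:]
     * [:- (3 * m - 8), 1:] ^ (2 * q - 3) * [:- (2 * m - 2), 1:] ^ (q - 1) * [:- (2 * m - 4), 1:] ^ q"
proof -
  obtain rest where rest: "distinct rest" "set rest = V - {a0, b0}"
    using finite_distinct_list[of "V - {a0, b0}"] finite_V by auto
  define ws where "ws = a0 # b0 # rest"
  have ws: "distinct ws" "set ws = V"
    unfolding ws_def using rest base_point_facts by auto
  have "kernel_mat vs vs (dist_signless_laplacian V pattern_dist) = kernel_mat vs vs DQ"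
    using vs dist_signless_laplacian_pattern_dist by (intro kernel_mat_cong) auto
  also have "char_poly \<dots> = char_poly (kernel_mat ws ws DQ_triangular)"
    by (rule char_poly_kernel_mat_intertwined[OF vs ws coord_basis coord_DQ])
  also have "\<dots> = (\<Prod>u\<in>V. [:- DQ_triangular u u, 1:])"
  proof (rule char_poly_kernel_mat_lower_triangular[OF ws(1), unfolded ws(2)])
    fix i j assume ij: "i < j" "j < length ws"
    then have "ws ! j \<noteq> a0" "ws ! j \<noteq> ws ! i" "ws ! j = b0 \<Longrightarrow> ws ! i = a0"
      using ws(1) by (auto simp: ws_def nth_eq_iff_index_eq nth_Cons split: nat.splits)
    then show "DQ_triangular (ws ! i) (ws ! j) = 0"
      using DQ_triangular_eq_0 by (cases "ws ! j = b0") (auto simp: DQ_triangular_def)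
  qed
  finally show ?thesis
    unfolding prod_DQ_triangular_diag .
qed

end

section \<open>The quasidihedral group\<close>

lemma two_pow_dvd_mult_pred_diff_iff:
  fixes x :: int
  assumes "r \<ge> 2"
  shows "2 * 2 ^ r dvd x * (2 ^ r - 1) - x \<longleftrightarrow> 2 ^ r dvd x"
proof -
  have odd: "odd ((2::int) ^ (r - 1) - 1)" using assms by simp
  have "x * (2 ^ r - 1) - x = 2 * (x * (2 ^ (r - 1) - 1))"
    using assms by (cases r) (auto simp: algebra_simps)
  then have "2 * 2 ^ r dvd x * (2 ^ r - 1) - x \<longleftrightarrow> 2 ^ r dvd x * (2 ^ (r - 1) - 1)"
    by simp
  also have "\<dots> \<longleftrightarrow> 2 ^ r dvd x"
    using odd by (simp add: coprime_dvd_mult_left_iff coprime_power_left_iff)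
  finally show ?thesis .
qed

lemma nat_mod_eq_iff_int_dvd: "(i::nat) mod k = j mod k \<longleftrightarrow> int k dvd int i - int j"
  by (metis mod_eq_dvd_iff of_nat_eq_iff of_nat_mod)

lemma mod_eq_iff_mod_double:
  fixes i j q :: nat
  assumes "q > 0"
  shows "i mod q = j mod q \<longleftrightarrow> j mod (2 * q) = i mod (2 * q) \<or> j mod (2 * q) = (q + i) mod (2 * q)"
proof
  have split: "k mod (2 * q) = k mod q + q * (k div q mod 2)" for k
    by (simp add: mod_mult2_eq mult.commute)
  have "(q + i) mod q = i mod q" "(q + i) div q = Suc (i div q)"
    using assms by simp_all
  then show "i mod q = j mod q \<Longrightarrow> j mod (2 * q) = i mod (2 * q) \<or> j mod (2 * q) = (q + i) mod (2 * q)"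
    unfolding split[of j] split[of i] split[of "q + i"] by (auto simp: mod_Suc)
next
  have "k mod (2 * q) mod q = k mod q" for k
    by (simp add: mod_mod_cancel)
  then show "j mod (2 * q) = i mod (2 * q) \<or> j mod (2 * q) = (q + i) mod (2 * q) \<Longrightarrow> i mod q = j mod q"
    by (metis mod_add_self1)
qed

lemma dvd_less_double_cases:
  assumes "(q::nat) dvd i" "i < 2 * q"
  shows "i = 0 \<or> i = q"
proof -
  obtain k where k: "i = q * k" using assms(1) by (rule dvdE)
  then have "k < 2" using assms(2) by (simp add: mult.commute[of 2])
  then show ?thesis using k by (auto simp: less_2_cases_iff)
qed

locale quasidihedral = group G for G :: "('a, 'b) monoid_scheme" (structure) +
  fixes a b :: 'a and n :: nat
  assumes n_ge_4: "n \<ge> 4" and finite_G: "finite (carrier G)" and order_G: "card (carrier G) = 2 ^ n"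
    and a_closed [simp]: "a \<in> carrier G" and b_closed [simp]: "b \<in> carrier G"
    and generate_ab: "generate G {a, b} = carrier G"
    and a_order: "a [^] (2 ^ (n - 1) :: nat) = \<one>" and b_order: "b [^] (2::nat) = \<one>"
    and conj_b_a: "b \<otimes> a \<otimes> inv b = a [^] (2 ^ (n - 2) - 1 :: nat)"
begin

definition q :: nat where "q = 2 ^ (n - 2)"

lemma two_pow_n_minus_1: "(2::nat) ^ (n - 1) = 2 * q"
  using n_ge_4 by (simp add: q_def flip: power_Suc)

lemma two_pow_n: "(2::nat) ^ n = 4 * q"
proof -
  have "n = (n - 2) + 2" using n_ge_4 by simp
  then have "(2::nat) ^ n = 2 ^ (n - 2) * 2 ^ 2" by (metis power_add)
  then show ?thesis by (simp add: q_def)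
qed

lemma q_ge_4: "q \<ge> 4"
  using power_increasing[of 2 "n - 2" "2::nat"] n_ge_4 by (simp add: q_def)

lemma a_pow_2q: "a [^] (2 * q) = \<one>"
  using a_order two_pow_n_minus_1 by simp

lemma a_pow_mod: "a [^] (i::nat) = a [^] (i mod (2 * q))"
proof -
  have "a [^] i = (a [^] (2 * q)) [^] (i div (2 * q)) \<otimes> a [^] (i mod (2 * q))"
    by (simp add: nat_pow_pow nat_pow_mult)
  then show ?thesis by (simp add: a_pow_2q)
qed

lemma b_pow_mod: "b [^] (e::nat) = b [^] (e mod 2)"
proof -
  have "b [^] e = (b [^] (2::nat)) [^] (e div 2) \<otimes> b [^] (e mod 2)"
    by (simp only: nat_pow_pow nat_pow_mult b_closed mult_div_mod_eq)
  then show ?thesis by (simp add: b_order)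
qed

lemma inv_b: "inv b = b"
  using b_order by (intro inv_equality) (simp_all add: numeral_2_eq_2)

lemma b_mult_a: "b \<otimes> a = a [^] (q - 1) \<otimes> b"
  using conj_b_a inv_b by (simp add: q_def m_assoc flip: inv_solve_right)

lemma b_mult_a_pow: "b \<otimes> a [^] (i::nat) = a [^] (i * (q - 1)) \<otimes> b"
proof (induction i)
  case (Suc i)
  have "b \<otimes> a [^] Suc i = a [^] (i * (q - 1)) \<otimes> (b \<otimes> a)"
    using Suc by (simp flip: m_assoc)
  then show ?case by (simp add: b_mult_a nat_pow_mult add.commute flip: m_assoc)
qed simp

lemma b_pow_mult_a_pow: "b [^] (e::nat) \<otimes> a [^] (j::nat) = a [^] (j * (q - 1) ^ e) \<otimes> b [^] e"
proof (induction e arbitrary: j)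
  case (Suc e)
  have "b [^] Suc e \<otimes> a [^] j = b [^] e \<otimes> a [^] (j * (q - 1)) \<otimes> b"
    by (simp add: b_mult_a_pow m_assoc)
  also have "\<dots> = a [^] (j * (q - 1) ^ Suc e) \<otimes> b [^] Suc e"
    using Suc by (simp add: m_assoc mult.assoc mult.commute)
  finally show ?case .
qed simp

definition elt :: "nat \<Rightarrow> nat \<Rightarrow> 'a" where
  "elt i e = a [^] i \<otimes> b [^] e"

lemma elt_closed [simp]: "elt i e \<in> carrier G"
  by (simp add: elt_def)

lemma elt_mult: "elt i e \<otimes> elt j e' = elt (i + j * (q - 1) ^ e) (e + e')"
proof -
  have "elt i e \<otimes> elt j e' = a [^] i \<otimes> (b [^] e \<otimes> a [^] j) \<otimes> b [^] e'"
    by (simp add: elt_def m_assoc)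
  also have "\<dots> = a [^] i \<otimes> a [^] (j * (q - 1) ^ e) \<otimes> (b [^] e \<otimes> b [^] e')"
    by (simp add: b_pow_mult_a_pow m_assoc)
  finally show ?thesis by (simp add: elt_def nat_pow_mult)
qed

lemma elt_mod: "elt i e = elt (i mod (2 * q)) (e mod 2)"
  unfolding elt_def by (metis a_pow_mod b_pow_mod)

definition normal_forms :: "(nat \<times> nat) set" where
  "normal_forms = {..<2 * q} \<times> {..<2}"

lemma carrier_eq_elt_image: "carrier G = (\<lambda>(i, e). elt i e) ` normal_forms"
proof
  have elt_in: "elt i e \<in> (\<lambda>(i, e). elt i e) ` normal_forms" for i e
    using elt_mod[of i e] q_ge_4 unfolding normal_forms_def
    by (intro image_eqI[where x = "(i mod (2 * q), e mod 2)"]) auto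
  have "x \<in> (\<lambda>(i, e). elt i e) ` normal_forms" if "x \<in> generate G {a, b}" for x
    using that
  proof (induction rule: generate.induct)
    case one
    then show ?case using elt_in[of 0 0] by (simp add: elt_def)
  next
    case (incl h)
    then have "h = elt 1 0 \<or> h = elt 0 1" by (auto simp: elt_def)
    then show ?case using elt_in by blast
  next
    case (inv h)
    have "inv a = elt (2 * q - 1) 0"
      using a_pow_2q q_ge_4 by (intro inv_equality) (simp_all add: elt_def flip: nat_pow_Suc)
    moreover have "inv b = elt 0 1" by (simp add: elt_def inv_b)
    ultimately show ?case using inv elt_in by auto
  next
    case (eng h1 h2)
    then show ?case using elt_in by (auto simp: elt_mult)
  qed
  then show "carrier G \<subseteq> (\<lambda>(i, e). elt i e) ` normal_forms"
    using generate_ab by blast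
qed auto

lemma elt_eq_iff: "elt i e = elt j e' \<longleftrightarrow> i mod (2 * q) = j mod (2 * q) \<and> e mod 2 = e' mod 2"
proof
  have "card ((\<lambda>(i, e). elt i e) ` normal_forms) = card normal_forms"
    using order_G two_pow_n carrier_eq_elt_image by (simp add: normal_forms_def card_cartesian_product)
  then have "inj_on (\<lambda>(i, e). elt i e) normal_forms"
    by (simp add: eq_card_imp_inj_on normal_forms_def)
  moreover have "(i mod (2 * q), e mod 2) \<in> normal_forms" "(j mod (2 * q), e' mod 2) \<in> normal_forms"
    using q_ge_4 by (auto simp: normal_forms_def)
  ultimately show "elt i e = elt j e' \<Longrightarrow> i mod (2 * q) = j mod (2 * q) \<and> e mod 2 = e' mod 2"
    using elt_mod[of i e] elt_mod[of j e'] unfolding inj_on_def by auto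
qed (metis elt_mod)

lemma elt_commute_iff:
  "elt i e \<otimes> elt j e' = elt j e' \<otimes> elt i e \<longleftrightarrow>
    2 * int q dvd (int i + int j * (int q - 1) ^ e) - (int j + int i * (int q - 1) ^ e')"
  using q_ge_4 by (simp add: elt_mult elt_eq_iff nat_mod_eq_iff_int_dvd of_nat_diff add.commute)

lemma int_q: "int q = 2 ^ (n - 2)"
  by (simp add: q_def)

lemma commute_elt0_elt1: "elt i 0 \<otimes> elt j 1 = elt j 1 \<otimes> elt i 0 \<longleftrightarrow> q dvd i"
proof -
  have "(int i + int j * (int q - 1) ^ 0) - (int j + int i * (int q - 1) ^ 1)
      = - (int i * (int q - 1) - int i)"
    by (simp add: algebra_simps)
  then have "elt i 0 \<otimes> elt j 1 = elt j 1 \<otimes> elt i 0 \<longleftrightarrow> 2 * int q dvd int i * (int q - 1) - int i"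
    unfolding elt_commute_iff by (simp only: dvd_minus_iff)
  also have "\<dots> \<longleftrightarrow> int q dvd int i"
    unfolding int_q using n_ge_4 by (intro two_pow_dvd_mult_pred_diff_iff) simp
  finally show ?thesis by simp
qed

lemma commute_elt1_elt1: "elt i 1 \<otimes> elt j 1 = elt j 1 \<otimes> elt i 1 \<longleftrightarrow> i mod q = j mod q"
proof -
  have "(int i + int j * (int q - 1) ^ 1) - (int j + int i * (int q - 1) ^ 1)
      = - ((int i - int j) * (int q - 1) - (int i - int j))"
    by (simp add: algebra_simps)
  then have "elt i 1 \<otimes> elt j 1 = elt j 1 \<otimes> elt i 1 \<longleftrightarrow>
      2 * int q dvd (int i - int j) * (int q - 1) - (int i - int j)"
    unfolding elt_commute_iff by (simp only: dvd_minus_iff)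
  also have "\<dots> \<longleftrightarrow> int q dvd int i - int j"
    unfolding int_q using n_ge_4 by (intro two_pow_dvd_mult_pred_diff_iff) simp
  finally show ?thesis by (simp add: nat_mod_eq_iff_int_dvd)
qed

lemma elt_cases:
  assumes "x \<in> carrier G"
  obtains i where "i < 2 * q" "x = elt i 0" | i where "i < 2 * q" "x = elt i 1"
proof -
  obtain i e where "i < 2 * q" "e < 2" "x = elt i e"
    using assms unfolding carrier_eq_elt_image normal_forms_def by auto
  moreover have "e = 0 \<or> e = 1" using \<open>e < 2\<close> by auto
  ultimately show thesis using that by blast
qed

lemma a_pow_q_commute:
  assumes "x \<in> carrier G"
  shows "a [^] q \<otimes> x = x \<otimes> a [^] q"
  using assms
proof (cases rule: elt_cases)
  case (1 i)
  then show ?thesis using elt_commute_iff[of q 0 i 0] by (simp add: elt_def)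
next
  case (2 i)
  then show ?thesis using commute_elt0_elt1[of q i] by (simp add: elt_def)
qed

lemma center_eq: "grp_center G = {\<one>, a [^] q}"
proof
  show "grp_center G \<subseteq> {\<one>, a [^] q}"
  proof
    fix z assume "z \<in> grp_center G"
    then have "z \<in> carrier G" and central: "\<And>x. x \<in> carrier G \<Longrightarrow> z \<otimes> x = x \<otimes> z"
      unfolding grp_center_def by auto
    then show "z \<in> {\<one>, a [^] q}"
    proof (cases rule: elt_cases)
      case (1 i)
      then have "q dvd i" using central[of "elt 0 1"] commute_elt0_elt1 by simp
      then have "i = 0 \<or> i = q" using \<open>i < 2 * q\<close> by (rule dvd_less_double_cases)
      then show ?thesis using 1 by (auto simp: elt_def)
    next
      case (2 i)
      then have "q dvd 1" using central[of "elt 1 0"] commute_elt0_elt1[of 1 i] by auto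
      then show ?thesis using q_ge_4 by simp
    qed
  qed
  show "{\<one>, a [^] q} \<subseteq> grp_center G"
    using a_pow_q_commute by (auto simp: grp_center_def)
qed

lemma inj_on_elt: "inj_on (\<lambda>i. elt i e) {..<2 * q}"
  by (auto simp: inj_on_def elt_eq_iff)

definition Aset :: "'a set" where "Aset = (\<lambda>i. elt i 0) ` ({..<2 * q} - {0, q})"
definition B1set :: "'a set" where "B1set = (\<lambda>i. elt i 1) ` {..<q}"
definition B2set :: "'a set" where "B2set = (\<lambda>i. elt i 1) ` {q..<2 * q}"
definition shift :: "'a \<Rightarrow> 'a" where "shift x = a [^] q \<otimes> x"

lemma B1set_Un_B2set: "B1set \<union> B2set = (\<lambda>i. elt i 1) ` {..<2 * q}"
  unfolding B1set_def B2set_def by (auto simp flip: image_Un)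

lemma ncg_verts_eq: "ncg_verts G = Aset \<union> B1set \<union> B2set"
proof -
  let ?X0 = "(\<lambda>i. elt i 0) ` {..<2 * q}" and ?X1 = "(\<lambda>i. elt i 1) ` {..<2 * q}"
    and ?Z = "(\<lambda>i. elt i 0) ` {0, q}"
  have "carrier G = ?X0 \<union> ?X1"
    unfolding carrier_eq_elt_image normal_forms_def by (auto simp: less_2_cases_iff)
  moreover have "grp_center G = ?Z"
    by (simp add: center_eq elt_def)
  moreover have "?X1 \<inter> ?Z = {}"
    by (auto simp: elt_eq_iff)
  ultimately have "ncg_verts G = (?X0 - ?Z) \<union> ?X1"
    unfolding ncg_verts_def by blast
  also have "?X0 - ?Z = Aset"
    using q_ge_4 unfolding Aset_def by (intro inj_on_image_set_diff[OF inj_on_elt, symmetric]) auto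
  finally show ?thesis
    by (simp add: B1set_Un_B2set Un_assoc)
qed

lemma shift_elt: "shift (elt i e) = elt (q + i) e"
  unfolding shift_def elt_def by (simp add: nat_pow_mult flip: m_assoc)

lemma shift_shift: "x \<in> carrier G \<Longrightarrow> shift (shift x) = x"
  unfolding shift_def using a_pow_2q by (simp add: nat_pow_mult flip: m_assoc mult_2)

sublocale pattern: qd_distance_pattern "ncg_verts G" Aset B1set B2set shift q
proof
  show "finite (ncg_verts G)"
    using finite_G by (simp add: ncg_verts_def)
  show "ncg_verts G = Aset \<union> B1set \<union> B2set" by (rule ncg_verts_eq)
  show "Aset \<inter> B1set = {}" "Aset \<inter> B2set = {}"
    unfolding Aset_def B1set_def B2set_def by (auto simp: elt_eq_iff)
  show "B1set \<inter> B2set = {}"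
    unfolding B1set_def B2set_def by (auto simp: elt_eq_iff)
  show "card Aset + 2 = 2 * q"
    using q_ge_4 inj_on_elt unfolding Aset_def
    by (simp add: card_image inj_on_subset[of _ "{..<2 * q}"] card_Diff_subset)
  have "{..<q} \<subseteq> {..<2 * q}" "{q..<2 * q} \<subseteq> {..<2 * q}" by auto
  then show "card B1set = q" "card B2set = q"
    unfolding B1set_def B2set_def by (simp_all add: card_image inj_on_subset[OF inj_on_elt])
  show "shift u \<in> B2set" if "u \<in> B1set" for u
    using that unfolding B1set_def B2set_def by (auto simp: shift_elt)
  show "shift u \<in> B1set" if u: "u \<in> B2set" for u
  proof -
    obtain i where i: "u = elt i 1" "q \<le> i" "i < 2 * q" using u unfolding B2set_def by auto
    then have "shift u = elt (i - q) 1"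
      using elt_mod[of "q + i"] elt_mod[of "i - q"] by (simp add: shift_elt mod_if)
    then show ?thesis using i unfolding B1set_def by auto
  qed
  show "shift (shift u) = u" if "u \<in> B1set \<union> B2set" for u
    using that shift_shift unfolding B1set_def B2set_def by auto
qed

lemma a_in_Aset: "a \<in> Aset"
proof -
  have "a = elt 1 0" by (simp add: elt_def)
  then show ?thesis using q_ge_4 unfolding Aset_def by auto
qed

lemma b_in_B1set: "b \<in> B1set"
proof -
  have "b = elt 0 1" by (simp add: elt_def)
  then show ?thesis using q_ge_4 unfolding B1set_def by auto
qed

lemma adj_Aset_Bset:
  assumes x: "x \<in> Aset" and y: "y \<in> B1set \<union> B2set"
  shows "ncg_adj G x y"
proof -
  obtain i where i: "x = elt i 0" "i < 2 * q" "i \<noteq> 0" "i \<noteq> q" using x unfolding Aset_def by auto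
  obtain j where j: "y = elt j 1" using y unfolding B1set_Un_B2set by auto
  have "\<not> q dvd i" using i dvd_less_double_cases by blast
  then have "x \<otimes> y \<noteq> y \<otimes> x" using i j commute_elt0_elt1 by simp
  moreover have "x \<in> ncg_verts G" "y \<in> ncg_verts G" using x y ncg_verts_eq by auto
  ultimately show ?thesis by (auto simp: ncg_adj_def)
qed

lemma not_adj_Aset:
  assumes "x \<in> Aset" "y \<in> Aset"
  shows "\<not> ncg_adj G x y"
proof -
  obtain i j where "x = elt i 0" "y = elt j 0" using assms unfolding Aset_def by auto
  then show ?thesis by (simp add: ncg_adj_def elt_commute_iff)
qed

lemma adj_Bset_iff:
  assumes x: "x \<in> B1set \<union> B2set" and y: "y \<in> B1set \<union> B2set"
  shows "ncg_adj G x y \<longleftrightarrow> x \<noteq> y \<and> y \<noteq> shift x"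
proof -
  obtain i where i: "x = elt i 1" using x unfolding B1set_Un_B2set by auto
  obtain j where j: "y = elt j 1" using y unfolding B1set_Un_B2set by auto
  have "x \<otimes> y = y \<otimes> x \<longleftrightarrow> i mod q = j mod q"
    unfolding i j by (rule commute_elt1_elt1)
  also have "\<dots> \<longleftrightarrow> y = x \<or> y = shift x"
    using mod_eq_iff_mod_double[of q i j] q_ge_4 unfolding i j shift_elt by (simp add: elt_eq_iff)
  moreover have "x \<in> ncg_verts G" "y \<in> ncg_verts G" using x y ncg_verts_eq by auto
  ultimately show ?thesis by (auto simp: ncg_adj_def)
qed

lemma ncg_dist_eq_pattern_dist:
  assumes u: "u \<in> ncg_verts G" and v: "v \<in> ncg_verts G"
  shows "ncg_dist G u v = pattern.pattern_dist u v"
proof -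
  have B_if_not_A: "x \<in> B1set \<union> B2set" if "x \<in> ncg_verts G" "x \<notin> Aset" for x
    using that ncg_verts_eq by auto
  consider "u = v" | "u \<noteq> v" "u \<in> Aset" "v \<in> Aset" | "u \<in> Aset" "v \<notin> Aset"
    | "u \<notin> Aset" "v \<in> Aset" | "u \<noteq> v" "u \<notin> Aset" "v \<notin> Aset"
    by blast
  then show ?thesis
  proof cases
    case 1
    then show ?thesis using u by (simp add: ncg_dist_self pattern.pattern_dist_def)
  next
    case 2
    have "ncg_adj G u b" "ncg_adj G v b" using 2 b_in_B1set adj_Aset_Bset by auto
    then have "ncg_dist G u v = 2"
      using 2 not_adj_Aset ncg_adj_sym[of G v b] by (intro ncg_dist_common_neighbour) auto
    then show ?thesis using 2 by (simp add: pattern.pattern_dist_def)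
  next
    case 3
    then have "ncg_adj G u v" using v B_if_not_A adj_Aset_Bset by blast
    then show ?thesis using 3 by (auto simp: ncg_dist_adj pattern.pattern_dist_def)
  next
    case 4
    then have "ncg_adj G v u" using u B_if_not_A adj_Aset_Bset by blast
    then show ?thesis using 4 ncg_adj_sym[of G v u] by (auto simp: ncg_dist_adj pattern.pattern_dist_def)
  next
    case 5
    then have uB: "u \<in> B1set \<union> B2set" and vB: "v \<in> B1set \<union> B2set"
      using u v B_if_not_A by auto
    show ?thesis
    proof (cases "v = shift u")
      case True
      have "ncg_adj G a u" "ncg_adj G a v" using adj_Aset_Bset[OF a_in_Aset] uB vB by auto
      then have "ncg_dist G u v = 2"
        using 5 True adj_Bset_iff[OF uB vB] ncg_adj_sym[of G a u]
        by (intro ncg_dist_common_neighbour) auto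
      then show ?thesis using 5 True by (simp add: pattern.pattern_dist_def)
    next
      case False
      then have "ncg_adj G u v" using adj_Bset_iff[OF uB vB] 5 by simp
      then show ?thesis using 5 False by (simp add: ncg_dist_adj pattern.pattern_dist_def)
    qed
  qed
qed

lemma char_poly_ncg_DQ:
  fixes t :: real
  defines "m \<equiv> 2 * real q"
  assumes t: "t \<noteq> 0" "(m - 2) * t\<^sup>2 - (2 * m - 10) * t - m = 0"
    and vs: "distinct vs" "set vs = ncg_verts G"
  shows "char_poly (ncg_DQ G vs) =
    [:- (t * (m - 2) + 3 * m - 2), 1:] * [:- (3 * m - 2 - m / t), 1:]
     * [:- (3 * m - 8), 1:] ^ (2 * q - 3) * [:- (2 * m - 2), 1:] ^ (q - 1) * [:- (2 * m - 4), 1:] ^ q"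
proof -
  have "qd_distance_pattern_basis (ncg_verts G) Aset B1set B2set shift q a b t"
    using a_in_Aset b_in_B1set t unfolding m_def by unfold_locales auto
  note char_poly = qd_distance_pattern_basis.char_poly_pattern_DQ[OF this vs]
  have "ncg_DQ G vs = kernel_mat vs vs (dist_signless_laplacian (ncg_verts G) pattern.pattern_dist)"
    using vs ncg_dist_eq_pattern_dist unfolding ncg_DQ_eq_kernel_mat[OF vs(1)]
    by (intro kernel_mat_cong) (simp add: dist_signless_laplacian_def)
  then show ?thesis
    unfolding m_def by (simp only: char_poly)
qed

end

lemma factored_quadratic_roots:
  fixes c d e t1 t2 :: "'a :: field"
  assumes factored: "\<And>x. c * x\<^sup>2 - d * x - e = c * (x - t1) * (x - t2)" and "e \<noteq> 0"
  shows "t1 \<noteq> 0" and "c * t1\<^sup>2 - d * t1 - e = 0" and "t2 * c = - e / t1"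
proof -
  have vieta: "- e = c * t1 * t2" using factored[of 0] by simp
  then show "t1 \<noteq> 0" using \<open>e \<noteq> 0\<close> by auto
  then show "t2 * c = - e / t1" using vieta by (simp add: field_simps)
  show "c * t1\<^sup>2 - d * t1 - e = 0" using factored[of t1] by simp
qed

theorem theorem4p3:
  fixes G :: "('a, 'b) monoid_scheme" and a b :: 'a and n :: nat and t1 t2 :: real
    and vs :: "'a list"
  assumes n4: "n \<ge> 4"
    and grp: "group G"
    and fin: "finite (carrier G)"
    and ord: "card (carrier G) = 2 ^ n"
    and ab: "a \<in> carrier G" "b \<in> carrier G"
    and gen: "generate G {a, b} = carrier G"
    and rel_a: "a [^]\<^bsub>G\<^esub> (2 ^ (n - 1) :: nat) = \<one>\<^bsub>G\<^esub>"
    and rel_b: "b [^]\<^bsub>G\<^esub> (2 :: nat) = \<one>\<^bsub>G\<^esub>"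
    and rel_ba: "b \<otimes>\<^bsub>G\<^esub> a \<otimes>\<^bsub>G\<^esub> inv\<^bsub>G\<^esub> b = a [^]\<^bsub>G\<^esub> (2 ^ (n - 2) - 1 :: nat)"
    and roots: "\<And>x::real. (2 ^ (n - 1) - 2) * x ^ 2 - (2 ^ n - 10) * x - 2 ^ (n - 1)
                 = (2 ^ (n - 1) - 2) * (x - t1) * (x - t2)"
    and vs: "distinct vs" "set vs = ncg_verts G"
  shows "char_poly (ncg_DQ G vs) =
      [:- (2 ^ n - 4), 1:] ^ (2 ^ (n - 2))
    * [:- (2 ^ n - 2), 1:] ^ (2 ^ (n - 2) - 1)
    * [:- (2 ^ n + 2 ^ (n - 1) - 8), 1:] ^ (2 ^ (n - 1) - 3)
    * [:- (t1 * (2 ^ (n - 1) - 2) + 3 * 2 ^ (n - 1) - 2), 1:]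
    * [:- (t2 * (2 ^ (n - 1) - 2) + 3 * 2 ^ (n - 1) - 2), 1:]"
proof -
  interpret quasidihedral G a b n
    using assms by (simp add: quasidihedral_def quasidihedral_axioms_def)
  define m :: real where "m = 2 ^ (n - 1)"
  have m: "m = 2 * real q" "(2::real) ^ n = 2 * m"
    unfolding m_def using arg_cong[OF two_pow_n_minus_1, of real] arg_cong[OF two_pow_n, of real]
    by simp_all
  have "(2::real) ^ (n - 1) \<noteq> 0" by simp
  note t1 = factored_quadratic_roots[OF roots this, folded m_def, unfolded m(2)]
  have "char_poly (ncg_DQ G vs) =
    [:- (t1 * (m - 2) + 3 * m - 2), 1:] * [:- (3 * m - 2 - m / t1), 1:]
     * [:- (3 * m - 8), 1:] ^ (2 * q - 3) * [:- (2 * m - 2), 1:] ^ (q - 1) * [:- (2 * m - 4), 1:] ^ q"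
    using char_poly_ncg_DQ[OF t1(1) t1(2)[unfolded m(1)] vs, folded m(1)] .
  moreover have "3 * m - 2 - m / t1 = t2 * (m - 2) + 3 * m - 2" "3 * m - 8 = 2 * m + m - 8"
    using t1(3) by simp_all
  ultimately show ?thesis
    unfolding m_def[symmetric] m(2) two_pow_n_minus_1 q_def[symmetric] by (simp only: mult_ac)
qed

end
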